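(* Suppose the adversary places $b\ge 1$ bad objects into $s\ge 1$ targeted indices, each of which contains at least one of these bad objects. Then the adversary's total RB cost satisfies $\mathcal{B}\ge \dfrac{b^2}{8s}$.
   Context: Model. A hash table has $t$ indices with chaining. The objects at an index form a list, new objects are appended at the tail, and $L_i$ denotes the current number of objects in the list at index $i$. Under the algorithm \textsc{Depth Charge}, inserting an object at index $i$ costs the inserter an RB (resource-burning) cost of $L_i+1$. Objects inserted by the adversary are bad objects and are placed at indices of its choosing; objects inserted by clients are good objects. $\mathcal{B}$ denotes the total RB cost paid by the adversary. A targeted index is an index containing at least one bad object and at least one good object. *)

theory Defs
  imports Complex_Main
begin

text \<open>An execution is the list of insertions in chronological order.
  Each entry (i, bad) says an object was appended at index i; bad = True iff
  the object was inserted by the adversary.\<close>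
type_synonym history = "(nat \<times> bool) list"

definition list_len :: "history \<Rightarrow> nat \<Rightarrow> nat \<Rightarrow> nat" where
  "list_len h k i = length (filter (\<lambda>x. fst x = i) (take k h))"

definition insert_cost :: "history \<Rightarrow> nat \<Rightarrow> nat" where
  "insert_cost h k = list_len h k (fst (h ! k)) + 1"

definition adv_cost :: "history \<Rightarrow> nat" where
  "adv_cost h = (\<Sum>k\<in>{k. k < length h \<and> snd (h ! k)}. insert_cost h k)"

definition num_bad :: "history \<Rightarrow> nat" where
  "num_bad h = length (filter snd h)"

definition bad_indices :: "history \<Rightarrow> nat set" where
  "bad_indices h = {i. (i, True) \<in> set h}"

definition targeted :: "history \<Rightarrow> nat \<Rightarrow> bool" where
  "targeted h i \<longleftrightarrow> (i, True) \<in> set h \<and> (i, False) \<in> set h"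

end

theory Submission
  imports Defs "HOL-Analysis.Convex"
begin

text \<open>The k-th bad object placed at an index finds at least k - 1 objects there and so costs
  at least k. If n_i bad objects go to index i, the adversary pays at least
  the sum of the n_i^2 / 2, and by the quadratic-mean inequality over the s indices, whose
  n_i add up to b, this is at least b^2 / (2 s) \<ge> b^2 / (8 s).\<close>

definition bad_count :: "history \<Rightarrow> nat \<Rightarrow> nat" where
  "bad_count h i = length (filter (\<lambda>x. fst x = i \<and> snd x) h)"

lemma bad_count_append:
  "bad_count (h @ [(j, bd)]) i = bad_count h i + (if i = j \<and> bd then 1 else 0)"
  by (simp add: bad_count_def)

lemma bad_count_le_list_len: "bad_count h i \<le> list_len h (length h) i"
proof -
  have "filter (\<lambda>x. fst x = i \<and> snd x) h = filter snd (filter (\<lambda>x. fst x = i) h)"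
    by (simp add: conj_commute)
  then show ?thesis
    unfolding bad_count_def list_len_def by (metis take_all order_refl length_filter_le)
qed

lemma insert_cost_append:
  "k < length h \<Longrightarrow> insert_cost (h @ [x]) k = insert_cost h k"
  by (simp add: insert_cost_def list_len_def nth_append)

lemma adv_cost_append:
  "adv_cost (h @ [(j, bd)]) = adv_cost h + (if bd then list_len h (length h) j + 1 else 0)"
proof -
  let ?K = "{k. k < length h \<and> snd (h ! k)}"
  have bad_positions: "{k. k < length (h @ [(j, bd)]) \<and> snd ((h @ [(j, bd)]) ! k)}
      = ?K \<union> (if bd then {length h} else {})"
    by (auto simp: nth_append less_Suc_eq)
  have "(\<Sum>k\<in>?K. insert_cost (h @ [(j, bd)]) k) = (\<Sum>k\<in>?K. insert_cost h k)"
    by (rule sum.cong) (auto simp: insert_cost_append)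
  moreover have "insert_cost (h @ [(j, bd)]) (length h) = list_len h (length h) j + 1"
    by (simp add: insert_cost_def list_len_def)
  ultimately show ?thesis
    unfolding adv_cost_def bad_positions by (auto simp: sum.union_disjoint)
qed

lemma sum_bad_count_squares_le_adv_cost:
  assumes "finite S"
  shows "(\<Sum>i\<in>S. bad_count h i ^ 2) \<le> 2 * adv_cost h"
proof (induction h rule: rev_induct)
  case Nil
  then show ?case by (simp add: bad_count_def)
next
  case (snoc x h)
  obtain j bd where x: "x = (j, bd)" by (cases x)
  have squares_append: "(\<Sum>i\<in>S. bad_count (h @ [x]) i ^ 2)
      = (\<Sum>i\<in>S. bad_count h i ^ 2) + (if j \<in> S \<and> bd then 2 * bad_count h j + 1 else 0)"
  proof -
    have "(\<Sum>i\<in>S. bad_count (h @ [x]) i ^ 2)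
        = (\<Sum>i\<in>S. bad_count h i ^ 2 + (if i = j \<and> bd then 2 * bad_count h j + 1 else 0))"
      by (rule sum.cong) (auto simp: x bad_count_append power2_eq_square)
    also have "\<dots> = (\<Sum>i\<in>S. bad_count h i ^ 2)
        + (if j \<in> S \<and> bd then 2 * bad_count h j + 1 else 0)"
      using assms by (simp add: sum.distrib)
    finally show ?thesis .
  qed
  show ?case
    using snoc.IH bad_count_le_list_len[of h j]
    unfolding squares_append unfolding x adv_cost_append by auto
qed

lemma length_filter_eq_sum_fibres:
  assumes "finite S" and "\<forall>x\<in>set xs. P x \<longrightarrow> g x \<in> S"
  shows "length (filter P xs) = (\<Sum>i\<in>S. length (filter (\<lambda>x. g x = i \<and> P x) xs))"
  using assms(2)
proof (induction xs)
  case Nil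
  then show ?case by simp
next
  case (Cons a xs)
  have "(\<Sum>i\<in>S. length (filter (\<lambda>x. g x = i \<and> P x) (a # xs)))
      = (\<Sum>i\<in>S. length (filter (\<lambda>x. g x = i \<and> P x) xs) + (if i = g a \<and> P a then 1 else 0))"
    by (rule sum.cong) auto
  also have "\<dots> = (\<Sum>i\<in>S. length (filter (\<lambda>x. g x = i \<and> P x) xs)) + (if P a then 1 else 0)"
    using Cons.prems assms(1) by (simp add: sum.distrib)
  finally show ?case
    using Cons by simp
qed

lemma num_bad_eq_sum_bad_count:
  "finite (bad_indices h) \<Longrightarrow> num_bad h = (\<Sum>i\<in>bad_indices h. bad_count h i)"
  unfolding num_bad_def bad_count_def
  by (rule length_filter_eq_sum_fibres) (auto simp: bad_indices_def)

theorem lemma2: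
  fixes t b s :: nat and h :: history
  assumes "\<forall>x\<in>set h. fst x < t"
    and "num_bad h = b" and "b \<ge> 1"
    and "card (bad_indices h) = s" and "s \<ge> 1"
    and "\<forall>i\<in>bad_indices h. targeted h i"
  shows "real (adv_cost h) \<ge> real b ^ 2 / (8 * real s)"
proof -
  let ?S = "bad_indices h"
  have fin: "finite ?S"
    using assms(4,5) card.infinite by fastforce
  have "real b ^ 2 = (\<Sum>i\<in>?S. real (bad_count h i)) ^ 2"
    using num_bad_eq_sum_bad_count[OF fin] assms(2) by simp
  also have "\<dots> \<le> (\<Sum>i\<in>?S. real (bad_count h i) ^ 2) * real s"
    using sum_squared_le_sum_of_squares assms(4) by blast
  also have "\<dots> \<le> 2 * real (adv_cost h) * real s"
  proof (rule mult_right_mono)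
    have "real (\<Sum>i\<in>?S. bad_count h i ^ 2) \<le> real (2 * adv_cost h)"
      using sum_bad_count_squares_le_adv_cost[OF fin] of_nat_le_iff by blast
    then show "(\<Sum>i\<in>?S. real (bad_count h i) ^ 2) \<le> 2 * real (adv_cost h)"
      by simp
  qed simp
  finally have "real b ^ 2 \<le> 2 * real (adv_cost h) * real s" .
  also have "\<dots> \<le> real (adv_cost h) * (8 * real s)"
    by simp
  finally show ?thesis
    using assms(5) by (simp add: divide_le_eq)
qed

end
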